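(* Let $q$ be a power of $3$, and pick $a,b,c,d,e\in\mathbb{F}_q$ with $e\ne 0$. Then $\varphi\colon (x,y)\mapsto (x^3-exy^2-ax-by,\, y^3-cx-dy)$ permutes $\mathbb{F}_q\times\mathbb{F}_q$ if and only if $c=0$, $d$ is either zero or a nonsquare in $\mathbb{F}_q$, and one of the following holds: (i) $a=0$ and $e$ is a nonsquare in $\mathbb{F}_q$; or (ii) $q=3$, $a=-1$, and $e=1$. *)

theory Defs
  imports Main
begin

definition is_square :: "'a::field \<Rightarrow> bool" where
  "is_square x \<longleftrightarrow> (\<exists>t. x = t ^ 2)"

end

(*
  In characteristic 3 the map x \<mapsto> x^3 - m x is additive, so it is injective iff m is
  not a nonzero square. For c = 0 the map phi is triangular: it permutes F_q^2 iff
  y \<mapsto> y^3 - d y and all x \<mapsto> x^3 - (e y^2 + a) x - b y are injective, i.e. iff d and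
  every value e y^2 + a avoid the nonzero squares; for c \<noteq> 0 two explicit points collide.

  The condition on e y^2 + a is settled by counting. The squares Q and the set N of zero
  and nonsquares both have (q + 1)/2 elements, which is prime to the characteristic p,
  whereas a finite set closed under a nonzero translation has size divisible by p; so two
  translates of Q (or of e Q) that both lie in N must coincide. If e is a nonsquare, e Q
  and e Q + a lie in N, whence a = 0. If e is a square, every Q + w^2 a with w \<noteq> 0 lies
  in N, whence w^2 = 1 for all w \<noteq> 0, i.e. q = 3.
*)
theory Submission
  imports Defs "HOL-Computational_Algebra.Primes" "HOL-Number_Theory.Cong"
begin

lemma cube_add_CHAR_3:
  fixes x y :: "'a::comm_semiring_1"
  assumes "CHAR('a) = 3"
  shows "(x + y) ^ 3 = x ^ 3 + y ^ 3"
proof -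
  have "prime CHAR('a)" unfolding assms by simp
  from freshmans_dream[OF this assms[symmetric]] show ?thesis .
qed

lemma cube_diff_CHAR_3:
  fixes x y :: "'a::comm_ring_1"
  assumes "CHAR('a) = 3"
  shows "(x - y) ^ 3 = x ^ 3 - y ^ 3"
  using cube_add_CHAR_3[OF assms, of "x - y" y] by (simp add: algebra_simps)

lemma inj_cube_minus_linear_iff:
  fixes m k :: "'a::field"
  assumes "CHAR('a) = 3"
  shows "inj (\<lambda>x. x ^ 3 - m * x - k) \<longleftrightarrow> m = 0 \<or> \<not> is_square m"
proof
  assume inj: "inj (\<lambda>x. x ^ 3 - m * x - k)"
  show "m = 0 \<or> \<not> is_square m"
  proof (rule ccontr)
    assume "\<not> (m = 0 \<or> \<not> is_square m)"
    then obtain t where "m = t ^ 2" "t \<noteq> 0" by (auto simp: is_square_def)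
    then have "t ^ 3 - m * t - k = 0 ^ 3 - m * 0 - k"
      by (simp add: power2_eq_square power3_eq_cube)
    then show False using injD[OF inj] \<open>t \<noteq> 0\<close> by blast
  qed
next
  assume m: "m = 0 \<or> \<not> is_square m"
  show "inj (\<lambda>x. x ^ 3 - m * x - k)"
  proof (rule injI, rule ccontr)
    fix x y assume eq: "x ^ 3 - m * x - k = y ^ 3 - m * y - k" and "x \<noteq> y"
    have "(x - y) * ((x - y) ^ 2 - m) = (x - y) ^ 3 - m * (x - y)"
      by (simp add: power2_eq_square power3_eq_cube algebra_simps)
    also have "\<dots> = (x ^ 3 - m * x - k) - (y ^ 3 - m * y - k)"
      unfolding cube_diff_CHAR_3[OF assms] by (simp add: algebra_simps)
    also have "\<dots> = 0"
      using eq by simp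
    finally have "m = (x - y) ^ 2" using \<open>x \<noteq> y\<close> by simp
    then show False using m \<open>x \<noteq> y\<close> by (auto simp: is_square_def)
  qed
qed

lemma inj_skew_product_iff:
  fixes g :: "'b \<Rightarrow> 'a::finite \<Rightarrow> 'a"
  shows "inj (\<lambda>(x, y). (g y x, h y)) \<longleftrightarrow> inj h \<and> (\<forall>y. inj (g y))"
proof safe
  assume inj: "inj (\<lambda>(x, y). (g y x, h y))"
  show inj_g: "inj (g y)" for y
  proof (rule injI)
    fix x x' assume "g y x = g y x'"
    then show "x = x'" using injD[OF inj, of "(x, y)" "(x', y)"] by simp
  qed
  show "inj h"
  proof (rule injI)
    fix y y' assume "h y = h y'"
    have "surj (g y')" using finite_UNIV inj_g by (rule finite_UNIV_inj_surj)
    then obtain x' where "g y undefined = g y' x'" by (metis surjD)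
    then have "(undefined, y) = (x', y')"
      using injD[OF inj, of "(undefined, y)" "(x', y')"] \<open>h y = h y'\<close> by simp
    then show "y = y'" by simp
  qed
next
  assume "inj h" "\<forall>y. inj (g y)"
  show "inj (\<lambda>(x, y). (g y x, h y))"
  proof (rule injI, clarify)
    fix x y x' y' assume "g y x = g y' x'" "h y = h y'"
    moreover from \<open>inj h\<close> \<open>h y = h y'\<close> have "y = y'" by (rule injD)
    ultimately show "x = x' \<and> y = y'" using \<open>\<forall>y. inj (g y)\<close> by (simp add: inj_eq)
  qed
qed

lemma CHAR_dvd_card_if_translation_closed:
  fixes h :: "'a::field"
  assumes "CHAR('a) > 0" "h \<noteq> 0" "finite S" "\<And>x. x \<in> S \<Longrightarrow> x + h \<in> S"
  shows "CHAR('a) dvd card S"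
  using assms(3, 4)
proof (induction "card S" arbitrary: S rule: less_induct)
  case less
  define p where "p = CHAR('a)"
  show ?case
  proof (cases "S = {}")
    case False
    then obtain x where "x \<in> S" by blast
    define orbit where "orbit = (\<lambda>k. x + of_nat k * h) ` {..<p}"
    \<comment> \<open>Removing this orbit, which has exactly p elements, keeps S closed.\<close>
    have step: "x + of_nat (Suc k) * h = (x + of_nat k * h) + h" for k
      by (simp add: algebra_simps)
    have "x + of_nat k * h \<in> S" for k
    proof (induction k)
      case (Suc k)
      then show ?case using less.prems(2) step by metis
    qed (simp add: \<open>x \<in> S\<close>)
    then have orbit_sub: "orbit \<subseteq> S" by (auto simp: orbit_def)
    have "inj_on (\<lambda>k. x + of_nat k * h) {..<p}"
      using \<open>h \<noteq> 0\<close> by (auto intro!: inj_onI simp: of_nat_eq_iff_cong_CHAR p_def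
          dest: cong_less_modulus_unique_nat)
    then have card_orbit: "card orbit = p" by (simp add: orbit_def card_image)
    have "y + h \<notin> orbit" if "y \<in> S - orbit" for y
    proof
      assume "y + h \<in> orbit"
      then obtain k where "k < p" and k: "y + h = x + of_nat k * h" by (auto simp: orbit_def)
      define j where "j = (k + (p - 1)) mod p"
      have "(of_nat j :: 'a) = of_nat (k + (p - 1))"
        unfolding j_def by (subst of_nat_eq_iff_cong_CHAR) (simp add: p_def cong_def)
      also have "\<dots> = of_nat k - 1"
        using \<open>CHAR('a) > 0\<close> by (simp add: p_def of_nat_diff)
      finally have j: "(of_nat j :: 'a) = of_nat k - 1" .
      have "y = (y + h) - h" by simp
      also have "\<dots> = x + of_nat j * h" unfolding k j by (simp add: algebra_simps)
      finally have "y = x + of_nat j * h" .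
      moreover have "j < p" using assms(1) by (simp add: p_def j_def)
      ultimately have "y \<in> orbit" by (auto simp: orbit_def)
      then show False using that by blast
    qed
    then have closed: "y + h \<in> S - orbit" if "y \<in> S - orbit" for y
      using that less.prems(2) by blast
    have "p > 0" using assms(1) by (simp add: p_def)
    have card_S: "card S = card (S - orbit) + p"
      using orbit_sub card_orbit less.prems(1) card_mono[OF less.prems(1) orbit_sub]
      by (simp add: card_Diff_subset finite_subset)
    then have "p dvd card (S - orbit)"
      using \<open>p > 0\<close> less.prems(1) closed unfolding p_def by (intro less.hyps) auto
    then show ?thesis using card_S by (simp add: p_def)
  qed simp
qed

lemma translation_unique_if_not_CHAR_dvd_card:
  fixes A B :: "'a::field set"
  assumes "CHAR('a) > 0" "\<not> CHAR('a) dvd card A" "finite B" "card B \<le> card A"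
    and "(\<lambda>x. x + s) ` A \<subseteq> B" "(\<lambda>x. x + t) ` A \<subseteq> B"
  shows "s = t"
proof (rule ccontr)
  assume "s \<noteq> t"
  have "finite A" using assms(2) card.infinite by fastforce
  have image_eq: "(\<lambda>x. x + u) ` A = B" if "(\<lambda>x. x + u) ` A \<subseteq> B" for u
  proof (rule card_subset_eq[OF \<open>finite B\<close> that])
    have "card ((\<lambda>x. x + u) ` A) = card A" by (simp add: card_image)
    then show "card ((\<lambda>x. x + u) ` A) = card B"
      using assms(4) card_mono[OF \<open>finite B\<close> that] by simp
  qed
  have "x + (t - s) \<in> A" if "x \<in> A" for x
  proof -
    have "x + t \<in> (\<lambda>x. x + s) ` A"
      using that image_eq[OF assms(5)] image_eq[OF assms(6)] by blast
    then show ?thesis by (auto simp: algebra_simps)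
  qed
  then have "CHAR('a) dvd card A"
    using \<open>s \<noteq> t\<close> \<open>finite A\<close> assms(1) by (intro CHAR_dvd_card_if_translation_closed) auto
  then show False using assms(2) by contradiction
qed

lemma card_squares:
  assumes "(2::'a::{finite, field}) \<noteq> 0"
  shows "2 * card {x::'a. is_square x} = card (UNIV :: 'a set) + 1"
proof -
  define P where "P = (UNIV :: 'a set) - {0}"
  have fibre: "card {x \<in> P. x ^ 2 = y} = 2" if y: "y \<in> power2 ` P" for y
  proof -
    obtain w where w: "w \<in> P" "y = w ^ 2" using y by blast
    have "w \<noteq> -w"
      using w assms by (auto simp: P_def minus_equation_iff[of w] simp flip: mult_2)
    moreover have "{x \<in> P. x ^ 2 = y} = {w, -w}"
      using w by (auto simp: P_def power2_eq_iff)
    ultimately show ?thesis by simp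
  qed
  have "card P = (\<Sum>y \<in> power2 ` P. card {x \<in> P. x ^ 2 = y})"
    using card_eq_sum sum.image_gen[of P "\<lambda>_. 1 :: nat" power2] by simp
  also have "\<dots> = 2 * card (power2 ` P)" using fibre by simp
  finally have "card P = 2 * card (power2 ` P)" .
  moreover have "card P = card (UNIV :: 'a set) - 1" by (simp add: P_def card_Diff_subset)
  moreover have "{x. is_square x} = insert 0 (power2 ` P)"
    by (auto simp: is_square_def P_def image_iff)
  moreover have "0 \<notin> power2 ` P" by (auto simp: P_def)
  moreover have "card (UNIV :: 'a set) > 0" by (simp add: finite_UNIV_card_ge_0)
  ultimately show ?thesis by simp
qed

lemma card_zero_or_nonsquare:
  assumes "(2::'a::{finite, field}) \<noteq> 0"
  shows "card {x::'a. x = 0 \<or> \<not> is_square x} = card {x::'a. is_square x}"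
proof -
  have "{x::'a. x = 0 \<or> \<not> is_square x} = UNIV - ({x. is_square x} - {0})" by auto
  moreover have "is_square (0::'a)" by (simp add: is_square_def)
  ultimately show ?thesis using card_squares[OF assms] by (simp add: card_Diff_subset)
qed

lemma not_CHAR_dvd_card_squares:
  assumes "(2::'a::{finite, field}) \<noteq> 0"
  shows "\<not> CHAR('a) dvd card {x::'a. is_square x}"
proof
  assume "CHAR('a) dvd card {x::'a. is_square x}"
  moreover have "CHAR('a) dvd card (UNIV :: 'a set)"
    using CHAR_dvd_card_if_translation_closed[of "1::'a" UNIV] by (simp add: finite_imp_CHAR_pos)
  ultimately have "CHAR('a) dvd 1"
    using card_squares[OF assms] by (metis dvd_add_right_iff dvd_mult)
  then show False by simp
qed

lemma card_zero_one_minus_one: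
  assumes "(2::'a::ring_1) \<noteq> 0"
  shows "card {0, 1, -1::'a} = 3"
proof -
  have "1 \<noteq> (-1::'a)" using assms by (simp add: eq_neg_iff_add_eq_0 one_add_one)
  then show ?thesis by simp
qed

lemma zero_or_nonsquare_values_nonsquare_coeff:
  fixes a e :: "'a::{finite, field}"
  assumes "(2::'a) \<noteq> 0" "\<not> is_square e"
    and nonsq: "\<And>y. e * y ^ 2 + a = 0 \<or> \<not> is_square (e * y ^ 2 + a)"
  shows "a = 0"
proof -
  let ?Q = "{x::'a. is_square x}" and ?N = "{x::'a. x = 0 \<or> \<not> is_square x}"
  have "e \<noteq> 0" using assms(2) by (auto simp: is_square_def)
  then have card_eQ: "card ((*) e ` ?Q) = card ?Q" by (simp add: card_image inj_on_def)
  have "(\<lambda>x. x + 0) ` (*) e ` ?Q \<subseteq> ?N"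
  proof (clarsimp simp: is_square_def)
    fix t r :: 'a assume "e * t ^ 2 = r ^ 2" "r \<noteq> 0"
    moreover from this have "t \<noteq> 0" by auto
    ultimately have "e = (r / t) ^ 2" by (simp add: field_simps)
    then show False using assms(2) by (auto simp: is_square_def)
  qed
  moreover have "(\<lambda>x. x + a) ` (*) e ` ?Q \<subseteq> ?N"
    using nonsq by (auto simp: is_square_def)
  ultimately show "a = 0"
    using not_CHAR_dvd_card_squares[OF assms(1)] card_eQ card_zero_or_nonsquare[OF assms(1)]
    by (intro translation_unique_if_not_CHAR_dvd_card[of "(*) e ` ?Q" ?N])
      (auto simp: finite_imp_CHAR_pos)
qed

lemma zero_or_nonsquare_values_square_coeff:
  fixes a e :: "'a::{finite, field}"
  assumes "(2::'a) \<noteq> 0" "e \<noteq> 0" "is_square e"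
    and nonsq: "\<And>y. e * y ^ 2 + a = 0 \<or> \<not> is_square (e * y ^ 2 + a)"
  shows "card (UNIV :: 'a set) = 3 \<and> a = -1 \<and> e = 1"
proof -
  let ?Q = "{x::'a. is_square x}" and ?N = "{x::'a. x = 0 \<or> \<not> is_square x}"
  obtain s where s: "e = s ^ 2" "s \<noteq> 0" using assms(2,3) by (auto simp: is_square_def)
  have shifted: "(\<lambda>x. x + w ^ 2 * a) ` ?Q \<subseteq> ?N" if "w \<noteq> 0" for w
  proof (clarsimp simp: is_square_def)
    fix t r :: 'a assume "t ^ 2 + w ^ 2 * a = r ^ 2" "r \<noteq> 0"
    then have "e * (t / (w * s)) ^ 2 + a = (r / w) ^ 2" "r / w \<noteq> 0"
      using \<open>w \<noteq> 0\<close> s by (auto simp: field_simps)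
    then show False using nonsq[of "t / (w * s)"] by (auto simp: is_square_def)
  qed
  have translate_eq: "w ^ 2 * a = 1 ^ 2 * a" if "w \<noteq> 0" for w
    using not_CHAR_dvd_card_squares[OF assms(1)] card_zero_or_nonsquare[OF assms(1)]
      shifted[OF that] shifted[of 1]
    by (intro translation_unique_if_not_CHAR_dvd_card[of ?Q ?N]) (auto simp: finite_imp_CHAR_pos)
  have "a \<noteq> 0"
  proof
    assume "a = 0"
    then have one: "e * (1 / s) ^ 2 + a = 1 ^ 2" using s by (simp add: field_simps)
    then have "is_square (e * (1 / s) ^ 2 + a)" unfolding is_square_def by blast
    then show False using nonsq[of "1 / s"] one by simp
  qed
  have units: "w = 1 \<or> w = -1" if "w \<noteq> 0" for w :: 'a
    using translate_eq[OF that] \<open>a \<noteq> 0\<close> by (simp add: power2_eq_1_iff)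
  have "{0, 1, -1} = (UNIV :: 'a set)" using units by auto
  then have "card (UNIV :: 'a set) = 3" using card_zero_one_minus_one[OF assms(1)] by simp
  moreover have "e = 1" using s units[OF \<open>s \<noteq> 0\<close>] by auto
  moreover have "a \<noteq> 1"
  proof
    assume "a = 1"
    then have one: "e * 0 ^ 2 + a = 1 ^ 2" by simp
    then have "is_square (e * 0 ^ 2 + a)" unfolding is_square_def by blast
    then show False using nonsq[of 0] one by simp
  qed
  ultimately show ?thesis using units[OF \<open>a \<noteq> 0\<close>] by simp
qed

lemma zero_or_nonsquare_values_if:
  fixes a e :: "'a::{finite, field}"
  assumes "(2::'a) \<noteq> 0"
    and "(a = 0 \<and> \<not> is_square e) \<or> (card (UNIV :: 'a set) = 3 \<and> a = -1 \<and> e = 1)"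
  shows "e * y ^ 2 + a = 0 \<or> \<not> is_square (e * y ^ 2 + a)"
  using assms(2)
proof (elim disjE conjE)
  assume "a = 0" "\<not> is_square e"
  show ?thesis
  proof (cases "y = 0")
    case False
    have "e * y ^ 2 \<noteq> r ^ 2" for r
    proof
      assume "e * y ^ 2 = r ^ 2"
      then have "e = (r / y) ^ 2" using False by (simp add: field_simps)
      then show False using \<open>\<not> is_square e\<close> by (auto simp: is_square_def)
    qed
    then show ?thesis using \<open>a = 0\<close> by (auto simp: is_square_def)
  qed (simp add: \<open>a = 0\<close>)
next
  assume "card (UNIV :: 'a set) = 3" "a = -1" "e = 1"
  have "{0, 1, -1::'a} = UNIV"
    using card_zero_one_minus_one[OF assms(1)] \<open>card UNIV = 3\<close>
    by (metis card_subset_eq finite subset_UNIV)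
  then have squares: "x ^ 2 = 0 \<or> x ^ 2 = 1" for x :: 'a
    using UNIV_I[of x] by auto
  show ?thesis
  proof (rule disjCI)
    assume "\<not> \<not> is_square (e * y ^ 2 + a)"
    then obtain r where r: "e * y ^ 2 + a = r ^ 2" by (auto simp: is_square_def)
    show "e * y ^ 2 + a = 0"
    proof (rule ccontr)
      assume "e * y ^ 2 + a \<noteq> 0"
      then have "r ^ 2 = 1" using r squares[of r] by auto
      then have "y ^ 2 = 1 + 1" using r \<open>a = -1\<close> \<open>e = 1\<close> by (simp add: algebra_simps)
      then show False
        using squares[of y] assms(1) by (metis add_cancel_right_right one_add_one one_neq_zero)
    qed
  qed
qed

lemma zero_or_nonsquare_values_iff:
  fixes a e :: "'a::{finite, field}"
  assumes "(2::'a) \<noteq> 0" "e \<noteq> 0"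
  shows "(\<forall>y. e * y ^ 2 + a = 0 \<or> \<not> is_square (e * y ^ 2 + a)) \<longleftrightarrow>
    (a = 0 \<and> \<not> is_square e) \<or> (card (UNIV :: 'a set) = 3 \<and> a = -1 \<and> e = 1)"
  using assms zero_or_nonsquare_values_nonsquare_coeff[of e a]
    zero_or_nonsquare_values_square_coeff[of e a] zero_or_nonsquare_values_if[of a e]
  by blast

definition phi :: "'a::field \<Rightarrow> 'a \<Rightarrow> 'a \<Rightarrow> 'a \<Rightarrow> 'a \<Rightarrow> 'a \<times> 'a \<Rightarrow> 'a \<times> 'a" where
  "phi a b c d e = (\<lambda>(x, y). (x ^ 3 - e * x * y ^ 2 - a * x - b * y, y ^ 3 - c * x - d * y))"

lemma phi_not_inj_if_c_nonzero:
  fixes a b c d e :: "'a::field"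
  assumes "CHAR('a) = 3" "e \<noteq> 0" "c \<noteq> 0"
  shows "\<not> inj (phi a b c d e)"
proof
  assume inj: "inj (phi a b c d e)"
  define k where "k = (1 - d) / c"
  define x where "x = (k ^ 3 - (e + a) * k - b) / e"
  have k: "c * k = 1 - d" using assms(3) by (simp add: k_def)
  have x: "e * x = k ^ 3 - (e + a) * k - b" using assms(2) by (simp add: x_def)
  \<comment> \<open>The points (x, 0) and (x + k, 1) collide: k matches the second coordinates,
    and then x matches the first because (x + k)^3 = x^3 + k^3.\<close>
  have "(x + k) ^ 3 - e * (x + k) - a * (x + k) - b = x ^ 3 - a * x"
    using x by (simp add: cube_add_CHAR_3[OF assms(1)] algebra_simps)
  moreover have "1 - c * (x + k) - d = - c * x"
    using k by (simp add: algebra_simps)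
  ultimately have "phi a b c d e (x, 0) = phi a b c d e (x + k, 1)"
    by (simp add: phi_def)
  then have "(x, 0) = (x + k, 1 :: 'a)" by (rule injD[OF inj])
  then show False by simp
qed

lemma inj_phi_iff_if_c_zero:
  fixes a b d e :: "'a::{finite, field}"
  assumes "CHAR('a) = 3"
  shows "inj (phi a b 0 d e) \<longleftrightarrow>
    (d = 0 \<or> \<not> is_square d) \<and> (\<forall>y. e * y ^ 2 + a = 0 \<or> \<not> is_square (e * y ^ 2 + a))"
proof -
  define g where "g y x = x ^ 3 - (e * y ^ 2 + a) * x - b * y" for y x :: 'a
  define h where "h y = y ^ 3 - d * y" for y :: 'a
  have "phi a b 0 d e = (\<lambda>(x, y). (g y x, h y))"
    by (auto simp: phi_def g_def h_def algebra_simps)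
  then have "inj (phi a b 0 d e) \<longleftrightarrow> inj h \<and> (\<forall>y. inj (g y))"
    by (simp add: inj_skew_product_iff)
  then show ?thesis
    using inj_cube_minus_linear_iff[OF assms, of d 0]
    unfolding g_def[abs_def] h_def[abs_def] by (simp add: inj_cube_minus_linear_iff[OF assms])
qed

theorem theorem1p6:
  fixes a b c d e :: "'a::{finite, field}"
  assumes "CHAR('a) = 3"
    and "e \<noteq> 0"
  shows "bij (\<lambda>(x, y). (x ^ 3 - e * x * y ^ 2 - a * x - b * y, y ^ 3 - c * x - d * y))
     \<longleftrightarrow> (c = 0 \<and> (d = 0 \<or> \<not> is_square d) \<and>
          ((a = 0 \<and> \<not> is_square e) \<or> (card (UNIV :: 'a set) = 3 \<and> a = -1 \<and> e = 1)))"
proof -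
  have "(2::'a) \<noteq> 0" using of_nat_eq_0_iff_char_dvd[of 2, where 'a = 'a] assms(1) by simp
  have "bij (phi a b c d e) \<longleftrightarrow> inj (phi a b c d e)"
    using finite_UNIV_inj_surj[of "phi a b c d e"] by (auto simp: bij_def)
  also have "\<dots> \<longleftrightarrow> c = 0 \<and> (d = 0 \<or> \<not> is_square d) \<and>
      (\<forall>y. e * y ^ 2 + a = 0 \<or> \<not> is_square (e * y ^ 2 + a))"
    using phi_not_inj_if_c_nonzero[OF assms] inj_phi_iff_if_c_zero[OF assms(1)]
    by (cases "c = 0") simp_all
  finally show ?thesis
    using zero_or_nonsquare_values_iff[OF \<open>(2::'a) \<noteq> 0\<close> assms(2)] by (simp add: phi_def)
qed

end
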